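(* Let $(X,d,\ll,\le,\tau)$ be a regularly localizable Lorentzian pre-length space and let $\gamma:[a,b]\to X$ be a future-directed causal curve such that for some $a\le c<d\le b$ the restriction $\gamma|_{[c,d]}$ is rectifiable. Then there exists a future-directed timelike curve from $\gamma(a)$ to $\gamma(b)$. If $X$ is even SR-localizable, then this curve can be chosen to lie in any given neighborhood of $\gamma([a,b])$.
   Context: A causal space $(X,\ll,\le)$: $\le$ reflexive and transitive, $\ll$ transitive, $x\ll y\Rightarrow x\le y$; $x<y$ means $x\le y,x\ne y$; $I^\pm$ chronological future/past. A Lorentzian pre-length space $(X,d,\ll,\le,\tau)$ is a causal space with a metric $d$ and $\tau:X\times X\to[0,\infty]$ lower semicontinuous w.r.t. $d$, with $\tau(x,z)\ge\tau(x,y)+\tau(y,z)$ for $x\le y\le z$, $\tau(x,y)=0$ if $x\not\le y$, $\tau(x,y)>0\iff x\ll y$. Future-directed causal (timelike) curve: non-constant, $d$-locally Lipschitz $\gamma:I\to X$ with $\gamma(t_1)\le\gamma(t_2)$ (resp. $\ll$) for $t_1<t_2$; null if no two of its points are $\ll$-related; contains a null segment if null on a non-trivial subinterval. $L_\tau(\gamma)=\inf\sum_i\tau(\gamma(t_i),\gamma(t_{i+1}))$ over partitions of its domain; $\gamma$ is rectifiable if $L_\tau(\gamma|_{[t_1,t_2]})>0$ for all $t_1<t_2$ in its domain. $L^d$ is $d$-arclength. For an open set $\Omega$ consider: (a) some $C>0$ bounds $L^d$ of every causal curve in $\Omega$; (b) there is a continuous $\omega:\Omega\times\Omega\to[0,\infty)$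 making $\Omega$ with restricted $d,\ll,\le$ a Lorentzian pre-length space, with $I^\pm(y)\cap\Omega\ne\emptyset$ for all $y\in\Omega$; (c) for $p<q$ in $\Omega$ there is a future-directed causal curve $\gamma_{p,q}$ from $p$ to $q$ in $\Omega$ with $L_\tau(\gamma_{p,q})\ge L_\tau(\lambda)$ for all future-directed causal $\lambda$ from $p$ to $q$ in $\Omega$ and $L_\tau(\gamma_{p,q})=\omega(p,q)\le\tau(p,q)$; (d) whenever $p\ll q$ in $\Omega$, $\gamma_{p,q}$ is timelike and strictly longer than any future-directed causal curve in $\Omega$ from $p$ to $q$ containing a null segment. $X$ is regularly localizable if every point has an open neighborhood with (a)–(d), and SR-localizable if every point has a neighborhood basis of open sets with (a)–(d). *)

theory Defs
  imports "HOL-Analysis.Analysis"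
begin

text \<open>The metric d of the space is the metric dist of the type 'a :: metric_space.
  The time separation tau takes values in [0,\<infinity>], rendered as ennreal.\<close>

definition causal_space_on :: "'a set \<Rightarrow> ('a \<Rightarrow> 'a \<Rightarrow> bool) \<Rightarrow> ('a \<Rightarrow> 'a \<Rightarrow> bool) \<Rightarrow> bool" where
  "causal_space_on S ll le \<longleftrightarrow>
     (\<forall>x\<in>S. le x x) \<and>
     (\<forall>x\<in>S. \<forall>y\<in>S. \<forall>z\<in>S. le x y \<and> le y z \<longrightarrow> le x z) \<and>
     (\<forall>x\<in>S. \<forall>y\<in>S. \<forall>z\<in>S. ll x y \<and> ll y z \<longrightarrow> ll x z) \<and>
     (\<forall>x\<in>S. \<forall>y\<in>S. ll x y \<longrightarrow> le x y)"

definition lsc_on :: "'b::topological_space set \<Rightarrow> ('b \<Rightarrow> ennreal) \<Rightarrow> bool" where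
  "lsc_on S f \<longleftrightarrow> (\<forall>z\<in>S. \<forall>c. c < f z \<longrightarrow> (\<forall>\<^sub>F w in at z within S. c < f w))"

definition lpls_on :: "'a::metric_space set \<Rightarrow> ('a \<Rightarrow> 'a \<Rightarrow> bool) \<Rightarrow> ('a \<Rightarrow> 'a \<Rightarrow> bool)
    \<Rightarrow> ('a \<Rightarrow> 'a \<Rightarrow> ennreal) \<Rightarrow> bool" where
  "lpls_on S ll le tau \<longleftrightarrow>
     causal_space_on S ll le \<and>
     lsc_on (S \<times> S) (\<lambda>(x, y). tau x y) \<and>
     (\<forall>x\<in>S. \<forall>y\<in>S. \<forall>z\<in>S. le x y \<and> le y z \<longrightarrow> tau x y + tau y z \<le> tau x z) \<and>
     (\<forall>x\<in>S. \<forall>y\<in>S. \<not> le x y \<longrightarrow> tau x y = 0) \<and>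
     (\<forall>x\<in>S. \<forall>y\<in>S. 0 < tau x y \<longleftrightarrow> ll x y)"

definition loc_lipschitz_on :: "real set \<Rightarrow> (real \<Rightarrow> 'a::metric_space) \<Rightarrow> bool" where
  "loc_lipschitz_on I \<gamma> \<longleftrightarrow>
     (\<forall>t\<in>I. \<exists>e>0. \<exists>L. \<forall>s\<in>I \<inter> ball t e. \<forall>s'\<in>I \<inter> ball t e.
        dist (\<gamma> s) (\<gamma> s') \<le> L * dist s s')"

definition fd_causal_curve :: "('a::metric_space \<Rightarrow> 'a \<Rightarrow> bool) \<Rightarrow> (real \<Rightarrow> 'a) \<Rightarrow> real \<Rightarrow> real \<Rightarrow> bool" where
  "fd_causal_curve le \<gamma> a b \<longleftrightarrow>
     (\<exists>s\<in>{a..b}. \<exists>t\<in>{a..b}. \<gamma> s \<noteq> \<gamma> t) \<and>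
     loc_lipschitz_on {a..b} \<gamma> \<and>
     (\<forall>s t. a \<le> s \<and> s < t \<and> t \<le> b \<longrightarrow> le (\<gamma> s) (\<gamma> t))"

definition fd_timelike_curve :: "('a::metric_space \<Rightarrow> 'a \<Rightarrow> bool) \<Rightarrow> (real \<Rightarrow> 'a) \<Rightarrow> real \<Rightarrow> real \<Rightarrow> bool" where
  "fd_timelike_curve ll \<gamma> a b \<longleftrightarrow>
     (\<exists>s\<in>{a..b}. \<exists>t\<in>{a..b}. \<gamma> s \<noteq> \<gamma> t) \<and>
     loc_lipschitz_on {a..b} \<gamma> \<and>
     (\<forall>s t. a \<le> s \<and> s < t \<and> t \<le> b \<longrightarrow> ll (\<gamma> s) (\<gamma> t))"

definition is_partition :: "real \<Rightarrow> real \<Rightarrow> nat \<Rightarrow> (nat \<Rightarrow> real) \<Rightarrow> bool" where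
  "is_partition a b n t \<longleftrightarrow> t 0 = a \<and> t n = b \<and> (\<forall>i<n. t i < t (Suc i))"

definition L_tau :: "('a \<Rightarrow> 'a \<Rightarrow> ennreal) \<Rightarrow> (real \<Rightarrow> 'a) \<Rightarrow> real \<Rightarrow> real \<Rightarrow> ennreal" where
  "L_tau tau \<gamma> a b =
     Inf {(\<Sum>i<n. tau (\<gamma> (t i)) (\<gamma> (t (Suc i)))) | n t. is_partition a b n t}"

definition L_d :: "(real \<Rightarrow> 'a::metric_space) \<Rightarrow> real \<Rightarrow> real \<Rightarrow> ennreal" where
  "L_d \<gamma> a b =
     Sup {(\<Sum>i<n. ennreal (dist (\<gamma> (t i)) (\<gamma> (t (Suc i))))) | n t. is_partition a b n t}"

definition rectifiable_on :: "('a \<Rightarrow> 'a \<Rightarrow> ennreal) \<Rightarrow> (real \<Rightarrow> 'a) \<Rightarrow> real \<Rightarrow> real \<Rightarrow> bool" where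
  "rectifiable_on tau \<gamma> a b \<longleftrightarrow>
     (\<forall>t1 t2. a \<le> t1 \<and> t1 < t2 \<and> t2 \<le> b \<longrightarrow> 0 < L_tau tau \<gamma> t1 t2)"

definition contains_null_segment :: "('a::metric_space \<Rightarrow> 'a \<Rightarrow> bool) \<Rightarrow> ('a \<Rightarrow> 'a \<Rightarrow> bool)
    \<Rightarrow> (real \<Rightarrow> 'a) \<Rightarrow> real \<Rightarrow> real \<Rightarrow> bool" where
  "contains_null_segment ll le \<gamma> a b \<longleftrightarrow>
     (\<exists>s1 s2. a \<le> s1 \<and> s1 < s2 \<and> s2 \<le> b \<and> fd_causal_curve le \<gamma> s1 s2 \<and>
        (\<forall>t\<in>{s1..s2}. \<forall>t'\<in>{s1..s2}. \<not> ll (\<gamma> t) (\<gamma> t')))"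

definition good_nbhd :: "('a::metric_space \<Rightarrow> 'a \<Rightarrow> bool) \<Rightarrow> ('a \<Rightarrow> 'a \<Rightarrow> bool)
    \<Rightarrow> ('a \<Rightarrow> 'a \<Rightarrow> ennreal) \<Rightarrow> 'a set \<Rightarrow> bool" where
  "good_nbhd ll le tau \<Omega> \<longleftrightarrow> open \<Omega> \<and>
     \<comment> \<open>(a)\<close>
     (\<exists>C>0. \<forall>\<gamma> a b. fd_causal_curve le \<gamma> a b \<and> \<gamma> ` {a..b} \<subseteq> \<Omega> \<longrightarrow> L_d \<gamma> a b \<le> ennreal C) \<and>
     (\<exists>\<omega> :: 'a \<Rightarrow> 'a \<Rightarrow> real.
        \<comment> \<open>(b)\<close>
        (\<forall>x\<in>\<Omega>. \<forall>y\<in>\<Omega>. 0 \<le> \<omega> x y) \<and>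
        continuous_on (\<Omega> \<times> \<Omega>) (\<lambda>(x, y). \<omega> x y) \<and>
        lpls_on \<Omega> ll le (\<lambda>x y. ennreal (\<omega> x y)) \<and>
        (\<forall>y\<in>\<Omega>. (\<exists>x\<in>\<Omega>. ll y x) \<and> (\<exists>x\<in>\<Omega>. ll x y)) \<and>
        \<comment> \<open>(c) and (d)\<close>
        (\<forall>p\<in>\<Omega>. \<forall>q\<in>\<Omega>. le p q \<and> p \<noteq> q \<longrightarrow>
           (\<exists>\<gamma> a b. fd_causal_curve le \<gamma> a b \<and> \<gamma> a = p \<and> \<gamma> b = q \<and> \<gamma> ` {a..b} \<subseteq> \<Omega> \<and>
              (\<forall>\<eta> a' b'. fd_causal_curve le \<eta> a' b' \<and> \<eta> a' = p \<and> \<eta> b' = q \<and> \<eta> ` {a'..b'} \<subseteq> \<Omega>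
                  \<longrightarrow> L_tau tau \<eta> a' b' \<le> L_tau tau \<gamma> a b) \<and>
              L_tau tau \<gamma> a b = ennreal (\<omega> p q) \<and>
              ennreal (\<omega> p q) \<le> tau p q \<and>
              (ll p q \<longrightarrow>
                 fd_timelike_curve ll \<gamma> a b \<and>
                 (\<forall>\<eta> a' b'. fd_causal_curve le \<eta> a' b' \<and> \<eta> a' = p \<and> \<eta> b' = q \<and> \<eta> ` {a'..b'} \<subseteq> \<Omega>
                     \<and> contains_null_segment ll le \<eta> a' b'
                   \<longrightarrow> L_tau tau \<eta> a' b' < L_tau tau \<gamma> a b)))))"

definition regularly_localizable :: "('a::metric_space \<Rightarrow> 'a \<Rightarrow> bool) \<Rightarrow> ('a \<Rightarrow> 'a \<Rightarrow> bool)
    \<Rightarrow> ('a \<Rightarrow> 'a \<Rightarrow> ennreal) \<Rightarrow> bool" where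
  "regularly_localizable ll le tau \<longleftrightarrow> (\<forall>x. \<exists>\<Omega>. x \<in> \<Omega> \<and> good_nbhd ll le tau \<Omega>)"

definition SR_localizable :: "('a::metric_space \<Rightarrow> 'a \<Rightarrow> bool) \<Rightarrow> ('a \<Rightarrow> 'a \<Rightarrow> bool)
    \<Rightarrow> ('a \<Rightarrow> 'a \<Rightarrow> ennreal) \<Rightarrow> bool" where
  "SR_localizable ll le tau \<longleftrightarrow>
     (\<forall>x U. open U \<and> x \<in> U \<longrightarrow> (\<exists>\<Omega>. x \<in> \<Omega> \<and> \<Omega> \<subseteq> U \<and> good_nbhd ll le tau \<Omega>))"

end

theory Submission
  imports Defs
begin

text \<open>Rectifiability of \<gamma> on [c, d] gives \<gamma>(c) \<lless> \<gamma>(t0) for some t0 close to c, with both points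
  in one localizing neighbourhood, which contains a timelike curve between them. A timelike curve
  from p to x can then be pushed along \<gamma>: if x \<le> z lie in a localizing neighbourhood \<Omega>, cut the
  curve at a point w \<in> \<Omega> shortly before x; then w \<lless> x \<le> z gives w \<lless> z, and \<Omega> provides a timelike
  curve from w to z. A continuity induction pushes forward from \<gamma>(c) to \<gamma>(b) and backward to \<gamma>(a).
  In the SR-localizable case all neighbourhoods can be chosen inside the given U. If \<gamma>(a) = \<gamma>(b)
  the curve obtained might be constant, so it is routed through a point \<gamma>(t') \<noteq> \<gamma>(a).\<close>

lemma loc_lipschitz_on_interval_iff:
  "loc_lipschitz_on {a..b} f \<longleftrightarrow> (\<exists>L. L-lipschitz_on {a..b} f)"
proof
  assume "\<exists>L. L-lipschitz_on {a..b} f"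
  then obtain L where L: "L-lipschitz_on {a..b} f" ..
  show "loc_lipschitz_on {a..b} f"
    unfolding loc_lipschitz_on_def
  proof
    fix t
    have "\<forall>s\<in>{a..b} \<inter> ball t 1. \<forall>s'\<in>{a..b} \<inter> ball t 1. dist (f s) (f s') \<le> L * dist s s'"
      by (auto intro: lipschitz_onD[OF L])
    then show "\<exists>e>0. \<exists>L. \<forall>s\<in>{a..b} \<inter> ball t e. \<forall>s'\<in>{a..b} \<inter> ball t e.
        dist (f s) (f s') \<le> L * dist s s'"
      using zero_less_one by blast
  qed
next
  assume loc: "loc_lipschitz_on {a..b} f"
  have "\<exists>e>0. \<exists>L. L-lipschitz_on ({a..b} \<inter> ball t e) f" if t: "t \<in> {a..b}" for t
  proof -
    obtain e L where "e > 0" and L: "\<forall>s\<in>{a..b} \<inter> ball t e. \<forall>s'\<in>{a..b} \<inter> ball t e.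
        dist (f s) (f s') \<le> L * dist s s'"
      using loc[unfolded loc_lipschitz_on_def, rule_format, OF t] by (elim exE conjE)
    have "(max L 0)-lipschitz_on ({a..b} \<inter> ball t e) f"
    proof (rule lipschitz_onI)
      fix x y assume "x \<in> {a..b} \<inter> ball t e" "y \<in> {a..b} \<inter> ball t e"
      then have "dist (f x) (f y) \<le> L * dist x y" using L by blast
      also have "\<dots> \<le> max L 0 * dist x y" by (rule mult_right_mono) auto
      finally show "dist (f x) (f y) \<le> max L 0 * dist x y" .
    qed simp
    with \<open>e > 0\<close> show ?thesis by (intro exI conjI)
  qed
  then obtain e L where e: "\<And>t. t \<in> {a..b} \<Longrightarrow> e t > 0"
    and L: "\<And>t. t \<in> {a..b} \<Longrightarrow> (L t)-lipschitz_on ({a..b} \<inter> ball t (e t)) f"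
    by metis
  have "{a..b} \<subseteq> (\<Union>t\<in>{a..b}. ball t (e t / 2))"
    using e by force
  then obtain K where K: "K \<subseteq> {a..b}" "finite K" "{a..b} \<subseteq> (\<Union>t\<in>K. ball t (e t / 2))"
    by (rule compactE_image[OF compact_Icc, rotated]) auto
  have L_nonneg: "0 \<le> L t" if "t \<in> K" for t
    using K(1) that by (intro lipschitz_on_nonneg[OF L]) blast
  have "(\<Sum>t\<in>K. L t)-lipschitz_on {a..b} f"
  proof (rule lipschitz_on_closed_Union[where U = "\<lambda>t. {a..b} \<inter> cball t (e t / 2)"])
    fix t assume "t \<in> K"
    then have t: "t \<in> {a..b}" using K by blast
    show "(\<Sum>t\<in>K. L t)-lipschitz_on ({a..b} \<inter> cball t (e t / 2)) f"
    proof (rule lipschitz_on_mono[OF L[OF t]])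
      show "{a..b} \<inter> cball t (e t / 2) \<subseteq> {a..b} \<inter> ball t (e t)"
        using e[OF t] by auto
      show "L t \<le> (\<Sum>t\<in>K. L t)"
        using K(2) \<open>t \<in> K\<close> L_nonneg by (blast intro: member_le_sum)
    qed
  next
    show "0 \<le> (\<Sum>t\<in>K. L t)"
      using L_nonneg by (rule sum_nonneg)
    show "{a..b} \<subseteq> (\<Union>t\<in>K. {a..b} \<inter> cball t (e t / 2))"
      using K(3) by (force simp: subset_eq)
  qed (use K(2) in \<open>auto intro: closed_Int\<close>)
  then show "\<exists>L. L-lipschitz_on {a..b} f" ..
qed

lemma continuous_on_open_preimage_ball:
  fixes f :: "'a::metric_space \<Rightarrow> 'b::topological_space"
  assumes "continuous_on S f" "u \<in> S" "open \<Omega>" "f u \<in> \<Omega>"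
  obtains e where "e > 0" "S \<inter> ball u e \<subseteq> f -` \<Omega>"
proof -
  have "openin (top_of_set S) (S \<inter> f -` \<Omega>)"
    using assms(1,3) by (rule continuous_openin_preimage_gen)
  with assms(2,4) obtain e where "e > 0" "ball u e \<inter> S \<subseteq> S \<inter> f -` \<Omega>"
    unfolding openin_contains_ball by blast
  then show ?thesis using that by blast
qed

lemma continuous_on_interval_open_near_left:
  fixes f :: "real \<Rightarrow> 'a::topological_space"
  assumes "continuous_on {s..t} f" "s < t" "open \<Omega>" "f s \<in> \<Omega>"
  obtains u where "s < u" "u < t" "f u \<in> \<Omega>"
proof -
  obtain e where "e > 0" and e: "{s..t} \<inter> ball s e \<subseteq> f -` \<Omega>"
    using continuous_on_open_preimage_ball[OF assms(1) _ assms(3,4)] assms(2) by auto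
  obtain \<delta> where "0 < \<delta>" "\<delta> < min e (t - s)"
    using dense[of 0 "min e (t - s)"] \<open>e > 0\<close> assms(2) by auto
  then have "s + \<delta> \<in> {s..t} \<inter> ball s e"
    by (simp add: dist_real_def)
  with e have "f (s + \<delta>) \<in> \<Omega>" by blast
  with \<open>0 < \<delta>\<close> \<open>\<delta> < min e (t - s)\<close> show ?thesis
    by (intro that[of "s + \<delta>"]) auto
qed

lemma continuous_on_interval_open_near_right:
  fixes f :: "real \<Rightarrow> 'a::topological_space"
  assumes "continuous_on {s..t} f" "s < t" "open \<Omega>" "f t \<in> \<Omega>"
  obtains u where "s < u" "u < t" "f u \<in> \<Omega>"
proof -
  obtain e where "e > 0" and e: "{s..t} \<inter> ball t e \<subseteq> f -` \<Omega>"
    using continuous_on_open_preimage_ball[OF assms(1) _ assms(3,4)] assms(2) by auto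
  obtain \<delta> where "0 < \<delta>" "\<delta> < min e (t - s)"
    using dense[of 0 "min e (t - s)"] \<open>e > 0\<close> assms(2) by auto
  then have "t - \<delta> \<in> {s..t} \<inter> ball t e"
    by (simp add: dist_real_def)
  with e have "f (t - \<delta>) \<in> \<Omega>" by blast
  with \<open>0 < \<delta>\<close> \<open>\<delta> < min e (t - s)\<close> show ?thesis
    by (intro that[of "t - \<delta>"]) auto
qed

lemma propagate_along_curve:
  fixes \<gamma> :: "real \<Rightarrow> 'a::topological_space"
  assumes cont: "continuous_on {a..b} \<gamma>"
    and cover: "\<And>t. t \<in> {a..b} \<Longrightarrow> \<exists>\<Omega>\<in>G. \<gamma> t \<in> \<Omega>"
    and G_open: "\<And>\<Omega>. \<Omega> \<in> G \<Longrightarrow> open \<Omega>"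
    and mono: "\<And>s t. a \<le> s \<Longrightarrow> s < t \<Longrightarrow> t \<le> b \<Longrightarrow> rel (\<gamma> s) (\<gamma> t)"
    and step: "\<And>\<Omega> x z. \<Omega> \<in> G \<Longrightarrow> x \<in> \<Omega> \<Longrightarrow> z \<in> \<Omega> \<Longrightarrow> rel x z \<Longrightarrow> R x \<Longrightarrow> R z"
    and t: "a \<le> t0" "t0 \<le> t1" "t1 \<le> b"
    and start: "R (\<gamma> t0)"
  shows "R (\<gamma> t1)"
proof -
  \<comment> \<open>the property of the whole segment [t0, x] is locally constant in x\<close>
  let ?P = "\<lambda>x. \<forall>y\<in>{t0..x}. R (\<gamma> y)"
  have "?P t1"
  proof (rule connected_induction_simple[of "{t0..t1}" t0 t1 ?P])
    show "connected {t0..t1}" "t0 \<in> {t0..t1}" "t1 \<in> {t0..t1}" "?P t0"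
      using t start by auto
  next
    fix x assume x: "x \<in> {t0..t1}"
    obtain \<Omega> where \<Omega>: "\<Omega> \<in> G" "\<gamma> x \<in> \<Omega>"
      using cover[of x] x t by auto
    obtain e where "e > 0" and e: "{a..b} \<inter> ball x e \<subseteq> \<gamma> -` \<Omega>"
      using continuous_on_open_preimage_ball[OF cont _ G_open[OF \<Omega>(1)] \<Omega>(2)] x t by auto
    have "?P z" if y: "y \<in> {t0..t1} \<inter> ball x e" and z: "z \<in> {t0..t1} \<inter> ball x e"
      and Py: "?P y" for y z
    proof
      fix v assume v: "v \<in> {t0..z}"
      show "R (\<gamma> v)"
      proof (cases "v \<le> y")
        case True
        with Py v show ?thesis by auto
      next
        case False
        have "y < v" "v \<le> z" using False v by auto
        then have "v \<in> {a..b} \<inter> ball x e" "y \<in> {a..b} \<inter> ball x e"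
          using y z t by (auto simp: dist_real_def)
        with e have "\<gamma> y \<in> \<Omega>" "\<gamma> v \<in> \<Omega>" by auto
        moreover have "rel (\<gamma> y) (\<gamma> v)"
          using False y z v t by (intro mono) auto
        moreover have "R (\<gamma> y)" using Py y by auto
        ultimately show ?thesis by (rule step[OF \<Omega>(1)])
      qed
    qed
    moreover have "openin (top_of_set {t0..t1}) ({t0..t1} \<inter> ball x e)"
      by (simp add: openin_open_Int)
    moreover have "x \<in> {t0..t1} \<inter> ball x e"
      using x \<open>e > 0\<close> by simp
    ultimately show "\<exists>T. openin (top_of_set {t0..t1}) T \<and> x \<in> T \<and> (\<forall>y\<in>T. \<forall>z\<in>T. ?P y \<longrightarrow> ?P z)"
      by blast
  qed
  then show ?thesis using t by auto
qed

lemma propagate_along_curve_backward: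
  fixes \<gamma> :: "real \<Rightarrow> 'a::topological_space"
  assumes cont: "continuous_on {a..b} \<gamma>"
    and cover: "\<And>t. t \<in> {a..b} \<Longrightarrow> \<exists>\<Omega>\<in>G. \<gamma> t \<in> \<Omega>"
    and G_open: "\<And>\<Omega>. \<Omega> \<in> G \<Longrightarrow> open \<Omega>"
    and mono: "\<And>s t. a \<le> s \<Longrightarrow> s < t \<Longrightarrow> t \<le> b \<Longrightarrow> rel (\<gamma> s) (\<gamma> t)"
    and step: "\<And>\<Omega> x z. \<Omega> \<in> G \<Longrightarrow> x \<in> \<Omega> \<Longrightarrow> z \<in> \<Omega> \<Longrightarrow> rel z x \<Longrightarrow> R x \<Longrightarrow> R z"
    and t: "a \<le> t0" "t0 \<le> t1" "t1 \<le> b"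
    and start: "R (\<gamma> t1)"
  shows "R (\<gamma> t0)"
proof -
  have "continuous_on {-b..-a} (\<lambda>u. \<gamma> (- u))"
    by (intro continuous_on_compose2[OF cont] continuous_intros) auto
  then have "R ((\<lambda>u. \<gamma> (- u)) (- t0))"
  proof (rule propagate_along_curve[where G = G and rel = "\<lambda>x y. rel y x" and R = R
        and ?t0.0 = "- t1" and ?t1.0 = "- t0"])
    show "\<exists>\<Omega>\<in>G. \<gamma> (- t) \<in> \<Omega>" if "t \<in> {-b..-a}" for t
      using cover that by auto
    show "rel (\<gamma> (- t)) (\<gamma> (- s))" if "- b \<le> s" "s < t" "t \<le> - a" for s t
      using that by (intro mono) auto
  qed (use G_open step t start in auto)
  then show ?thesis by simp
qed

lemma L_tau_le_tau:
  assumes "s < t"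
  shows "L_tau tau \<gamma> s t \<le> tau (\<gamma> s) (\<gamma> t)"
proof -
  define p :: "nat \<Rightarrow> real" where "p i = (if i = 0 then s else t)" for i
  have "is_partition s t 1 p"
    using assms by (simp add: is_partition_def p_def)
  then have "L_tau tau \<gamma> s t \<le> (\<Sum>i<1. tau (\<gamma> (p i)) (\<gamma> (p (Suc i))))"
    unfolding L_tau_def by (blast intro: Inf_lower)
  also have "\<dots> = tau (\<gamma> s) (\<gamma> t)"
    by (simp add: p_def)
  finally show ?thesis .
qed

lemma fd_causal_curve_continuous: "fd_causal_curve le \<gamma> a b \<Longrightarrow> continuous_on {a..b} \<gamma>"
  unfolding fd_causal_curve_def loc_lipschitz_on_interval_iff
  by (blast intro: lipschitz_on_continuous_on)

locale lorentzian_pre_length_space =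
  fixes ll le :: "'a::metric_space \<Rightarrow> 'a \<Rightarrow> bool"
    and tau :: "'a \<Rightarrow> 'a \<Rightarrow> ennreal"
  assumes lpls: "lpls_on UNIV ll le tau"
begin

lemma ll_imp_le: "ll x y \<Longrightarrow> le x y"
  and ll_trans: "ll x y \<Longrightarrow> ll y z \<Longrightarrow> ll x z"
  and tau_pos_iff: "0 < tau x y \<longleftrightarrow> ll x y"
  and tau_reverse_triangle: "le x y \<Longrightarrow> le y z \<Longrightarrow> tau x y + tau y z \<le> tau x z"
  using lpls unfolding lpls_on_def causal_space_on_def by blast+

lemma le_ll_trans:
  assumes "le x y" "ll y z"
  shows "ll x z"
proof -
  have "0 < tau y z" using assms(2) tau_pos_iff by blast
  also have "\<dots> \<le> tau x y + tau y z" by simp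
  also have "\<dots> \<le> tau x z" using assms ll_imp_le by (blast intro: tau_reverse_triangle)
  finally show ?thesis using tau_pos_iff by blast
qed

lemma ll_le_trans:
  assumes "ll x y" "le y z"
  shows "ll x z"
proof -
  have "0 < tau x y" using assms(1) tau_pos_iff by blast
  also have "\<dots> \<le> tau x y + tau y z" by simp
  also have "\<dots> \<le> tau x z" using assms ll_imp_le by (blast intro: tau_reverse_triangle)
  finally show ?thesis using tau_pos_iff by blast
qed

lemma rectifiable_on_imp_ll:
  assumes "rectifiable_on tau \<gamma> c d" "c \<le> s" "s < t" "t \<le> d"
  shows "ll (\<gamma> s) (\<gamma> t)"
proof -
  have "0 < L_tau tau \<gamma> s t"
    using assms unfolding rectifiable_on_def by blast
  also have "\<dots> \<le> tau (\<gamma> s) (\<gamma> t)"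
    using assms(3) by (rule L_tau_le_tau)
  finally show ?thesis using tau_pos_iff by blast
qed

text \<open>Unlike fd_timelike_curve, a constant curve is admitted here; it is timelike
  exactly at points p with p \<lless> p.\<close>

definition timelike_on :: "(real \<Rightarrow> 'a) \<Rightarrow> real \<Rightarrow> real \<Rightarrow> bool" where
  "timelike_on \<sigma> s t \<longleftrightarrow> s < t \<and> (\<exists>L. L-lipschitz_on {s..t} \<sigma>) \<and>
     (\<forall>u v. s \<le> u \<longrightarrow> u < v \<longrightarrow> v \<le> t \<longrightarrow> ll (\<sigma> u) (\<sigma> v))"

lemma fd_timelike_curve_iff:
  "fd_timelike_curve ll \<sigma> s t \<longleftrightarrow> timelike_on \<sigma> s t \<and> (\<exists>u\<in>{s..t}. \<exists>v\<in>{s..t}. \<sigma> u \<noteq> \<sigma> v)"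
proof -
  have "s < t" if "\<exists>u\<in>{s..t}. \<exists>v\<in>{s..t}. \<sigma> u \<noteq> \<sigma> v"
  proof (rule ccontr)
    assume "\<not> s < t"
    then have "{s..t} \<subseteq> {s}" by auto
    with that show False by auto
  qed
  then show ?thesis
    unfolding fd_timelike_curve_def timelike_on_def loc_lipschitz_on_interval_iff by blast
qed

lemma timelike_on_continuous: "timelike_on \<sigma> s t \<Longrightarrow> continuous_on {s..t} \<sigma>"
  unfolding timelike_on_def by (blast intro: lipschitz_on_continuous_on)

lemma timelike_on_subinterval:
  assumes "timelike_on \<sigma> s t" "s \<le> s'" "s' < t'" "t' \<le> t"
  shows "timelike_on \<sigma> s' t'"
proof -
  have "{s'..t'} \<subseteq> {s..t}" using assms by auto
  with assms show ?thesis
    unfolding timelike_on_def by (meson lipschitz_on_subset order_trans)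
qed

lemma timelike_on_shift:
  assumes "timelike_on \<sigma> s t"
  shows "timelike_on (\<lambda>u. \<sigma> (u - h)) (s + h) (t + h)"
proof -
  obtain L where L: "L-lipschitz_on {s..t} \<sigma>"
    using assms unfolding timelike_on_def by blast
  have "1-lipschitz_on {s + h..t + h} (\<lambda>u. u - h)"
    by (rule lipschitz_onI) (simp_all add: dist_real_def)
  moreover have "(\<lambda>u. u - h) ` {s + h..t + h} = {s..t}"
    by (auto simp: image_iff algebra_simps intro: bexI[of _ "_ + h"])
  ultimately have "(L * 1)-lipschitz_on {s + h..t + h} (\<lambda>u. \<sigma> (u - h))"
    using L by (intro lipschitz_on_compose2) auto
  with assms show ?thesis
    unfolding timelike_on_def by auto
qed

lemma timelike_on_join:
  assumes \<sigma>1: "timelike_on \<sigma>1 s m" and \<sigma>2: "timelike_on \<sigma>2 m t" and "\<sigma>1 m = \<sigma>2 m"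
  shows "timelike_on (\<lambda>u. if u \<le> m then \<sigma>1 u else \<sigma>2 u) s t"
proof -
  obtain L1 L2 where "L1-lipschitz_on {s..m} \<sigma>1" "L2-lipschitz_on {m..t} \<sigma>2"
    using \<sigma>1 \<sigma>2 unfolding timelike_on_def by blast
  then have "(max L1 L2)-lipschitz_on {s..t} (\<lambda>u. if u \<le> m then \<sigma>1 u else \<sigma>2 u)"
    using assms(3) by (rule lipschitz_on_concat_max)
  moreover have "ll (if u \<le> m then \<sigma>1 u else \<sigma>2 u) (if v \<le> m then \<sigma>1 v else \<sigma>2 v)"
    if "s \<le> u" "u < v" "v \<le> t" for u v
  proof -
    consider "v \<le> m" | "m \<le> u" | "u < m" "m < v" by linarith
    then show ?thesis
    proof cases
      case 3
      then have "ll (\<sigma>1 u) (\<sigma>1 m)" "ll (\<sigma>2 m) (\<sigma>2 v)"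
        using \<sigma>1 \<sigma>2 that unfolding timelike_on_def by auto
      with 3 assms(3) show ?thesis by (auto intro: ll_trans)
    qed (use \<sigma>1 \<sigma>2 that assms(3) in \<open>auto simp: timelike_on_def\<close>)
  qed
  ultimately show ?thesis
    using \<sigma>1 \<sigma>2 unfolding timelike_on_def by auto
qed

definition timelike_reach :: "'a set \<Rightarrow> 'a \<Rightarrow> 'a \<Rightarrow> bool" where
  "timelike_reach U p q \<longleftrightarrow>
     (\<exists>\<sigma> s t. timelike_on \<sigma> s t \<and> \<sigma> s = p \<and> \<sigma> t = q \<and> \<sigma> ` {s..t} \<subseteq> U)"

lemma timelike_reach_mono: "timelike_reach U p q \<Longrightarrow> U \<subseteq> V \<Longrightarrow> timelike_reach V p q"
  unfolding timelike_reach_def by blast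

lemma timelike_reach_imp_ll: "timelike_reach U p q \<Longrightarrow> ll p q"
  unfolding timelike_reach_def timelike_on_def by auto

lemma timelike_reach_refl:
  assumes "ll p p" "p \<in> U"
  shows "timelike_reach U p p"
proof -
  have "timelike_on (\<lambda>_. p) 0 1"
    using assms(1) unfolding timelike_on_def by (auto intro: lipschitz_on_constant)
  with assms(2) show ?thesis
    unfolding timelike_reach_def by fastforce
qed

lemma timelike_reach_concat:
  assumes "timelike_reach U p q" "timelike_reach U q r"
  obtains \<sigma> s t where "timelike_on \<sigma> s t" "\<sigma> s = p" "\<sigma> t = r" "q \<in> \<sigma> ` {s..t}"
    "\<sigma> ` {s..t} \<subseteq> U"
proof -
  obtain \<sigma>1 s1 m where \<sigma>1: "timelike_on \<sigma>1 s1 m" "\<sigma>1 s1 = p" "\<sigma>1 m = q" "\<sigma>1 ` {s1..m} \<subseteq> U"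
    using assms(1) unfolding timelike_reach_def by blast
  obtain \<sigma>2 s2 t2 where \<sigma>2: "timelike_on \<sigma>2 s2 t2" "\<sigma>2 s2 = q" "\<sigma>2 t2 = r" "\<sigma>2 ` {s2..t2} \<subseteq> U"
    using assms(2) unfolding timelike_reach_def by blast
  define h where "h = m - s2"
  define \<sigma> where "\<sigma> u = (if u \<le> m then \<sigma>1 u else \<sigma>2 (u - h))" for u
  have "timelike_on (\<lambda>u. \<sigma>2 (u - h)) m (t2 + h)"
    using timelike_on_shift[OF \<sigma>2(1), of h] by (simp add: h_def)
  then have "timelike_on \<sigma> s1 (t2 + h)"
    unfolding \<sigma>_def using \<sigma>1 \<sigma>2 by (intro timelike_on_join) (auto simp: h_def)
  moreover have "\<sigma> s1 = p" "\<sigma> (t2 + h) = r" "\<sigma> m = q"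
    using \<sigma>1 \<sigma>2 by (auto simp: \<sigma>_def h_def timelike_on_def)
  moreover have "m \<in> {s1..t2 + h}"
    using \<sigma>1 \<sigma>2 by (auto simp: h_def timelike_on_def)
  moreover have "\<sigma> ` {s1..t2 + h} \<subseteq> U"
  proof
    fix x assume "x \<in> \<sigma> ` {s1..t2 + h}"
    then obtain u where u: "u \<in> {s1..t2 + h}" "x = \<sigma> u" by blast
    show "x \<in> U"
    proof (cases "u \<le> m")
      case True
      with u \<sigma>1(4) show ?thesis by (auto simp: \<sigma>_def)
    next
      case False
      with u \<sigma>2(4) show ?thesis by (auto simp: \<sigma>_def h_def)
    qed
  qed
  ultimately show ?thesis
    by (intro that[of \<sigma> s1 "t2 + h"]) auto
qed

lemma timelike_reach_trans:
  assumes "timelike_reach U p q" "timelike_reach U q r"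
  shows "timelike_reach U p r"
proof -
  obtain \<sigma> s t where "timelike_on \<sigma> s t" "\<sigma> s = p" "\<sigma> t = r" "\<sigma> ` {s..t} \<subseteq> U"
    using assms by (rule timelike_reach_concat)
  then show ?thesis
    unfolding timelike_reach_def by blast
qed

lemma fd_timelike_curve_through:
  assumes "timelike_reach U p q" "timelike_reach U q r" "p \<noteq> q"
  shows "\<exists>\<sigma> s t. fd_timelike_curve ll \<sigma> s t \<and> \<sigma> s = p \<and> \<sigma> t = r \<and> \<sigma> ` {s..t} \<subseteq> U"
proof -
  obtain \<sigma> s t where \<sigma>: "timelike_on \<sigma> s t" "\<sigma> s = p" "\<sigma> t = r" "q \<in> \<sigma> ` {s..t}"
    "\<sigma> ` {s..t} \<subseteq> U"
    using assms(1,2) by (rule timelike_reach_concat)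
  then have "s \<in> {s..t}" by (simp add: timelike_on_def)
  with \<sigma> assms(3) have "fd_timelike_curve ll \<sigma> s t"
    unfolding fd_timelike_curve_iff by blast
  with \<sigma> show ?thesis by blast
qed

lemma fd_timelike_curve_of_reach:
  assumes "timelike_reach U p q" "p \<noteq> q"
  shows "\<exists>\<sigma> s t. fd_timelike_curve ll \<sigma> s t \<and> \<sigma> s = p \<and> \<sigma> t = q \<and> \<sigma> ` {s..t} \<subseteq> U"
proof -
  obtain \<sigma> s t where \<sigma>: "timelike_on \<sigma> s t" "\<sigma> s = p" "\<sigma> t = q" "\<sigma> ` {s..t} \<subseteq> U"
    using assms(1) unfolding timelike_reach_def by blast
  then have "s \<in> {s..t}" "t \<in> {s..t}" by (simp_all add: timelike_on_def)
  with \<sigma> assms(2) have "fd_timelike_curve ll \<sigma> s t"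
    unfolding fd_timelike_curve_iff by blast
  with \<sigma> show ?thesis by blast
qed

lemma timelike_reach_subinterval:
  assumes "timelike_on \<sigma> s t" "\<sigma> ` {s..t} \<subseteq> U" "s \<le> s'" "s' < t'" "t' \<le> t"
  shows "timelike_reach U (\<sigma> s') (\<sigma> t')"
proof -
  have "timelike_on \<sigma> s' t'"
    using assms(1,3-5) by (rule timelike_on_subinterval)
  moreover have "\<sigma> ` {s'..t'} \<subseteq> U"
    using assms(2-5) by (meson atLeastAtMost_iff image_mono order_trans subset_iff)
  ultimately show ?thesis
    unfolding timelike_reach_def by blast
qed

lemma good_nbhd_timelike_curve:
  assumes "good_nbhd ll le tau \<Omega>" "p \<in> \<Omega>" "q \<in> \<Omega>" "ll p q" "p \<noteq> q"
  shows "\<exists>\<gamma> a b. fd_timelike_curve ll \<gamma> a b \<and> \<gamma> a = p \<and> \<gamma> b = q \<and> \<gamma> ` {a..b} \<subseteq> \<Omega>"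
proof -
  have "le p q" using assms(4) by (rule ll_imp_le)
  with assms show ?thesis
    unfolding good_nbhd_def by (elim conjE exE) fast
qed

lemma good_nbhd_timelike_reach:
  assumes "good_nbhd ll le tau \<Omega>" "p \<in> \<Omega>" "q \<in> \<Omega>" "ll p q"
  shows "timelike_reach \<Omega> p q"
proof (cases "p = q")
  case True
  with assms show ?thesis by (simp add: timelike_reach_refl)
next
  case False
  obtain \<gamma> a b where
    "fd_timelike_curve ll \<gamma> a b" "\<gamma> a = p" "\<gamma> b = q" "\<gamma> ` {a..b} \<subseteq> \<Omega>"
    using good_nbhd_timelike_curve[OF assms False] by blast
  then show ?thesis
    unfolding timelike_reach_def fd_timelike_curve_iff by blast
qed

lemma timelike_reach_push_forward:
  assumes \<Omega>: "good_nbhd ll le tau \<Omega>" "\<Omega> \<subseteq> U" and "x \<in> \<Omega>" "z \<in> \<Omega>" "le x z"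
    and "timelike_reach U p x"
  shows "timelike_reach U p z"
proof -
  obtain \<sigma> s t where \<sigma>: "timelike_on \<sigma> s t" "\<sigma> s = p" "\<sigma> t = x" "\<sigma> ` {s..t} \<subseteq> U"
    using assms(6) unfolding timelike_reach_def by blast
  have "open \<Omega>" "s < t"
    using \<Omega>(1) \<sigma>(1) unfolding good_nbhd_def timelike_on_def by blast+
  then obtain t' where t': "s < t'" "t' < t" "\<sigma> t' \<in> \<Omega>"
    using continuous_on_interval_open_near_right[OF timelike_on_continuous[OF \<sigma>(1)]] \<sigma>(3) \<open>x \<in> \<Omega>\<close>
    by metis
  have "timelike_reach U p (\<sigma> t')"
    using timelike_reach_subinterval[OF \<sigma>(1,4), of s t'] \<sigma>(2) t' by simp
  moreover have "ll (\<sigma> t') x"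
    using \<sigma>(1,3) t' unfolding timelike_on_def by auto
  then have "timelike_reach U (\<sigma> t') z"
    using good_nbhd_timelike_reach[OF \<Omega>(1) t'(3) \<open>z \<in> \<Omega>\<close>] ll_le_trans \<open>le x z\<close> \<Omega>(2)
    by (blast intro: timelike_reach_mono)
  ultimately show ?thesis by (rule timelike_reach_trans)
qed

lemma timelike_reach_push_backward:
  assumes \<Omega>: "good_nbhd ll le tau \<Omega>" "\<Omega> \<subseteq> U" and "x \<in> \<Omega>" "z \<in> \<Omega>" "le z x"
    and "timelike_reach U x q"
  shows "timelike_reach U z q"
proof -
  obtain \<sigma> s t where \<sigma>: "timelike_on \<sigma> s t" "\<sigma> s = x" "\<sigma> t = q" "\<sigma> ` {s..t} \<subseteq> U"
    using assms(6) unfolding timelike_reach_def by blast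
  have "open \<Omega>" "s < t"
    using \<Omega>(1) \<sigma>(1) unfolding good_nbhd_def timelike_on_def by blast+
  then obtain s' where s': "s < s'" "s' < t" "\<sigma> s' \<in> \<Omega>"
    using continuous_on_interval_open_near_left[OF timelike_on_continuous[OF \<sigma>(1)]] \<sigma>(2) \<open>x \<in> \<Omega>\<close>
    by metis
  have "timelike_reach U (\<sigma> s') q"
    using timelike_reach_subinterval[OF \<sigma>(1,4), of s' t] \<sigma>(3) s' by simp
  moreover have "ll x (\<sigma> s')"
    using \<sigma>(1,2) s' unfolding timelike_on_def by auto
  then have "timelike_reach U z (\<sigma> s')"
    using good_nbhd_timelike_reach[OF \<Omega>(1) \<open>z \<in> \<Omega>\<close> s'(3)] le_ll_trans \<open>le z x\<close> \<Omega>(2)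
    by (blast intro: timelike_reach_mono)
  ultimately show ?thesis by (rule timelike_reach_trans[rotated])
qed

lemma timelike_reach_along_curve:
  assumes \<gamma>: "fd_causal_curve le \<gamma> a b"
    and cover: "\<And>t. t \<in> {a..b} \<Longrightarrow> \<exists>\<Omega>. \<gamma> t \<in> \<Omega> \<and> \<Omega> \<subseteq> U \<and> good_nbhd ll le tau \<Omega>"
    and t: "a \<le> t0" "t0 \<le> t1" "t1 \<le> b"
  shows timelike_reach_along_curve_forward:
      "timelike_reach U p (\<gamma> t0) \<Longrightarrow> timelike_reach U p (\<gamma> t1)"
    and timelike_reach_along_curve_backward:
      "timelike_reach U (\<gamma> t1) q \<Longrightarrow> timelike_reach U (\<gamma> t0) q"
proof -
  let ?G = "{\<Omega>. \<Omega> \<subseteq> U \<and> good_nbhd ll le tau \<Omega>}"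
  have cover': "\<exists>\<Omega>\<in>?G. \<gamma> t \<in> \<Omega>" if "t \<in> {a..b}" for t
    using cover[OF that] by blast
  have open_G: "open \<Omega>" if "\<Omega> \<in> ?G" for \<Omega>
    using that unfolding good_nbhd_def by blast
  have causal: "le (\<gamma> s) (\<gamma> t)" if "a \<le> s" "s < t" "t \<le> b" for s t
    using \<gamma> that unfolding fd_causal_curve_def by blast
  note propagate = fd_causal_curve_continuous[OF \<gamma>] cover' open_G causal
  show "timelike_reach U p (\<gamma> t0) \<Longrightarrow> timelike_reach U p (\<gamma> t1)"
    by (rule propagate_along_curve[where rel = le, OF propagate _ t])
      (auto intro: timelike_reach_push_forward)
  show "timelike_reach U (\<gamma> t1) q \<Longrightarrow> timelike_reach U (\<gamma> t0) q"
    by (rule propagate_along_curve_backward[where rel = le, OF propagate _ t])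
      (auto intro: timelike_reach_push_backward)
qed

lemma timelike_curve_along_causal_curve:
  assumes \<gamma>: "fd_causal_curve le \<gamma> a b"
    and cd: "a \<le> c" "c < d" "d \<le> b" and rect: "rectifiable_on tau \<gamma> c d"
    and cover: "\<And>t. t \<in> {a..b} \<Longrightarrow> \<exists>\<Omega>. \<gamma> t \<in> \<Omega> \<and> \<Omega> \<subseteq> U \<and> good_nbhd ll le tau \<Omega>"
  shows "\<exists>\<sigma> s t. fd_timelike_curve ll \<sigma> s t \<and> \<sigma> s = \<gamma> a \<and> \<sigma> t = \<gamma> b \<and> \<sigma> ` {s..t} \<subseteq> U"
proof -
  note forward = timelike_reach_along_curve_forward[OF \<gamma> cover]
  note backward = timelike_reach_along_curve_backward[OF \<gamma> cover]
  obtain \<Omega> where \<Omega>: "\<gamma> c \<in> \<Omega>" "\<Omega> \<subseteq> U" "good_nbhd ll le tau \<Omega>"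
    using cover[of c] cd by auto
  have "continuous_on {c..d} \<gamma>" "open \<Omega>"
    using continuous_on_subset[OF fd_causal_curve_continuous[OF \<gamma>]] cd \<Omega>(3)
    unfolding good_nbhd_def by auto
  then obtain t0 where t0: "c < t0" "t0 < d" "\<gamma> t0 \<in> \<Omega>"
    using continuous_on_interval_open_near_left cd(2) \<Omega>(1) by metis
  have "ll (\<gamma> c) (\<gamma> t0)"
    using rectifiable_on_imp_ll[OF rect] t0 by simp
  with \<Omega> t0(3) have "timelike_reach U (\<gamma> c) (\<gamma> t0)"
    by (blast intro: good_nbhd_timelike_reach timelike_reach_mono)
  then have "timelike_reach U (\<gamma> c) (\<gamma> b)"
    using forward[of t0 b] cd t0 by simp
  then have ab: "timelike_reach U (\<gamma> a) (\<gamma> b)"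
    using backward[of a c] cd by simp
  show ?thesis
  proof (cases "\<gamma> a = \<gamma> b")
    case False
    with ab show ?thesis by (rule fd_timelike_curve_of_reach)
  next
    case True
    obtain u v where "u \<in> {a..b}" "v \<in> {a..b}" "\<gamma> u \<noteq> \<gamma> v"
      using \<gamma> unfolding fd_causal_curve_def by blast
    then obtain t' where t': "t' \<in> {a..b}" "\<gamma> t' \<noteq> \<gamma> a"
      by metis
    have "ll (\<gamma> a) (\<gamma> a)" "\<gamma> a \<in> U"
      using timelike_reach_imp_ll[OF ab] True cover[of a] t' by auto
    then have "timelike_reach U (\<gamma> a) (\<gamma> a)" "timelike_reach U (\<gamma> b) (\<gamma> b)"
      using True by (simp_all add: timelike_reach_refl)
    then have "timelike_reach U (\<gamma> a) (\<gamma> t')" "timelike_reach U (\<gamma> t') (\<gamma> b)"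
      using forward[of a t'] backward[of t' b] t' by auto
    with t'(2) show ?thesis
      by (intro fd_timelike_curve_through) auto
  qed
qed

end

theorem corollary3p21:
  fixes ll le :: "'a::metric_space \<Rightarrow> 'a \<Rightarrow> bool"
    and tau :: "'a \<Rightarrow> 'a \<Rightarrow> ennreal"
    and \<gamma> :: "real \<Rightarrow> 'a"
    and a b c d :: real
  assumes "lpls_on UNIV ll le tau"
    and "regularly_localizable ll le tau"
    and "fd_causal_curve le \<gamma> a b"
    and "a \<le> c" and "c < d" and "d \<le> b"
    and "rectifiable_on tau \<gamma> c d"
  shows "(\<exists>\<sigma> s t. fd_timelike_curve ll \<sigma> s t \<and> \<sigma> s = \<gamma> a \<and> \<sigma> t = \<gamma> b) \<and>
         (SR_localizable ll le tau \<longrightarrow>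
            (\<forall>U. open U \<and> \<gamma> ` {a..b} \<subseteq> U \<longrightarrow>
               (\<exists>\<sigma> s t. fd_timelike_curve ll \<sigma> s t \<and> \<sigma> s = \<gamma> a \<and> \<sigma> t = \<gamma> b \<and> \<sigma> ` {s..t} \<subseteq> U)))"
proof -
  interpret lorentzian_pre_length_space ll le tau
    using assms(1) by unfold_locales
  note along = timelike_curve_along_causal_curve[OF assms(3-7)]
  have "\<exists>\<sigma> s t. fd_timelike_curve ll \<sigma> s t \<and> \<sigma> s = \<gamma> a \<and> \<sigma> t = \<gamma> b \<and> \<sigma> ` {s..t} \<subseteq> UNIV"
    using assms(2) unfolding regularly_localizable_def by (intro along) blast
  moreover have "\<exists>\<sigma> s t. fd_timelike_curve ll \<sigma> s t \<and> \<sigma> s = \<gamma> a \<and> \<sigma> t = \<gamma> b \<and> \<sigma> ` {s..t} \<subseteq> U"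
    if "SR_localizable ll le tau" "open U" "\<gamma> ` {a..b} \<subseteq> U" for U
    using that unfolding SR_localizable_def by (intro along) blast
  ultimately show ?thesis by blast
qed

end
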